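(* Let $k\ge 3$, $n_1,\dots,n_k\ge 2$ and $r\in[k]$. The complete $k$-partite graph $K_{n_1,\dots,n_k}$ and the clique-star $CS^r_{n_1,\dots,n_k}$ (on the same vertex set) are not locally equivalent; that is, $\mathcal{O}(K_{n_1,\dots,n_k})\cap\mathcal{O}(CS^r_{n_1,\dots,n_k})=\emptyset$.
   Context: Both graphs are on vertex set $U_1\sqcup\cdots\sqcup U_k$ with $|U_i|=n_i$. $K_{n_1,\dots,n_k}$: edges exactly between different parts. $CS^r_{n_1,\dots,n_k}$: each $U_i$ is a clique, every vertex of $U_r$ is adjacent to every vertex of each $U_i$ with $i\ne r$, and no edges between $U_i,U_l$ for distinct $i,l\ne r$. The local complement $c_v(G)$ complements the edges among the neighbours of $v$; two graphs are locally equivalent if related by a finite sequence of local complements; $\mathcal{O}(G)$ is the set of graphs locally equivalent to $G$. *)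

theory Defs
  imports Main
begin

text \<open>Simple graphs on vertex type 'a, given by a (symmetric, irreflexive) adjacency
  predicate. Vertex set of the multipartite graphs: pairs (i,j) with i < k, j < n i;
  part U_i = {(i,j). j < n i} (parts indexed 0..k-1).\<close>

type_synonym 'a graph = "'a \<Rightarrow> 'a \<Rightarrow> bool"

definition local_complement :: "'a \<Rightarrow> 'a graph \<Rightarrow> 'a graph" where
  "local_complement v G = (\<lambda>x y.
     if x \<noteq> y \<and> G v x \<and> G v y then \<not> G x y else G x y)"

definition loc_step :: "'a set \<Rightarrow> 'a graph \<Rightarrow> 'a graph \<Rightarrow> bool" where
  "loc_step V G H \<longleftrightarrow> (\<exists>v\<in>V. H = local_complement v G)"

definition locally_equivalent :: "'a set \<Rightarrow> 'a graph \<Rightarrow> 'a graph \<Rightarrow> bool" where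
  "locally_equivalent V G H \<longleftrightarrow> (loc_step V)\<^sup>*\<^sup>* G H"

definition loc_orbit :: "'a set \<Rightarrow> 'a graph \<Rightarrow> 'a graph set" where
  "loc_orbit V G = {H. locally_equivalent V G H}"

definition mp_vertices :: "nat \<Rightarrow> (nat \<Rightarrow> nat) \<Rightarrow> (nat \<times> nat) set" where
  "mp_vertices k n = {(i, j). i < k \<and> j < n i}"

definition complete_multipartite :: "nat \<Rightarrow> (nat \<Rightarrow> nat) \<Rightarrow> (nat \<times> nat) graph" where
  "complete_multipartite k n = (\<lambda>x y.
     x \<in> mp_vertices k n \<and> y \<in> mp_vertices k n \<and> fst x \<noteq> fst y)"

definition clique_star :: "nat \<Rightarrow> (nat \<Rightarrow> nat) \<Rightarrow> nat \<Rightarrow> (nat \<times> nat) graph" where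
  "clique_star k n r = (\<lambda>x y.
     x \<in> mp_vertices k n \<and> y \<in> mp_vertices k n \<and> x \<noteq> y \<and>
     (fst x = fst y \<or> fst x = r \<or> fst y = r))"

end

theory Submission
  imports Defs "HOL-Library.Z2"
begin

text \<open>Over GF(2), local complementation at v adds G v x * G v y to every entry G x y with
  x \<noteq> y. For disjoint vertex sets X and Y covering the vertices, this acts on the X \<times> Y
  adjacency matrix as an elementary row operation (row v is added to the rows of the neighbours
  of v) if v \<in> X, and as the analogous column operation if v \<in> Y. Hence linear independence of
  the rows of that matrix is invariant under local equivalence. Let X contain one vertex of
  each of the k parts. Every column of the X \<times> Y matrix of K is a column of J - I, which is
  nonsingular iff k is even; every column of the matrix of CS^r is a column of the matrix with
  entries [i = j \<or> i = r \<or> j = r], which is nonsingular iff k is odd.\<close>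

text \<open>A set S \<subseteq> X stands for the GF(2) sum of the rows indexed by S, so this says that the
  X \<times> Y adjacency matrix has rank card X.\<close>

definition cut_rows_independent :: "'a graph \<Rightarrow> 'a set \<Rightarrow> 'a set \<Rightarrow> bool" where
  "cut_rows_independent G X Y \<longleftrightarrow>
     (\<forall>S\<subseteq>X. (\<forall>y\<in>Y. (\<Sum>x\<in>S. of_bool (G x y) :: bit) = 0) \<longrightarrow> S = {})"

lemma bit_eq_0_iff_even: "(b::bit) = 0 \<longleftrightarrow> even b"
  by (cases b) simp_all

lemma sum_of_bool_bit_eq_0_iff:
  assumes "finite S"
  shows "((\<Sum>x\<in>S. of_bool (P x)) :: bit) = 0 \<longleftrightarrow> even (card {x\<in>S. P x})"
proof -
  have "{x\<in>S. P x} = S \<inter> {x. P x}" by blast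
  then have "((\<Sum>x\<in>S. of_bool (P x)) :: bit) = of_nat (card {x\<in>S. P x})"
    using assms by (simp only: sum_of_bool_eq)
  then show ?thesis by (simp only: bit_eq_0_iff_even even_of_nat_iff)
qed

lemma sum_sym_diff_singleton_bit:
  assumes "finite S"
  shows "(\<Sum>x\<in>sym_diff S {v}. f x :: bit) = sum f S + f v"
proof (cases "v \<in> S")
  case True
  then have "sym_diff S {v} = S - {v}" by blast
  moreover have "sum f S = f v + (\<Sum>x\<in>S - {v}. f x)" using assms True by (simp only: sum.remove)
  ultimately show ?thesis by (cases "f v") simp_all
next
  case False
  then have "sym_diff S {v} = insert v S" by blast
  then show ?thesis using sum.insert[OF assms False, of f] by (simp only: add.commute)
qed

lemma symp_local_complement: "symp G \<Longrightarrow> symp (local_complement v G)"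
  unfolding symp_def local_complement_def by auto

lemma irreflp_local_complement: "irreflp G \<Longrightarrow> irreflp (local_complement v G)"
  unfolding irreflp_def local_complement_def by auto

lemma local_complement_local_complement:
  "\<not> G v v \<Longrightarrow> local_complement v (local_complement v G) = G"
  unfolding local_complement_def by (intro ext) auto

lemma of_bool_local_complement:
  assumes "x \<noteq> y"
  shows "(of_bool (local_complement v G x y) :: bit) =
         of_bool (G x y) + of_bool (G v x) * of_bool (G v y)"
  using assms by (cases "G v x"; cases "G v y"; cases "G x y") (auto simp: local_complement_def)

lemma sum_of_bool_local_complement:
  assumes "y \<notin> S"
  shows "(\<Sum>x\<in>S. of_bool (local_complement v G x y) :: bit) =
         (\<Sum>x\<in>S. of_bool (G x y)) + (\<Sum>x\<in>S. of_bool (G v x)) * of_bool (G v y)"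
proof -
  have "(\<Sum>x\<in>S. of_bool (local_complement v G x y) :: bit) =
        (\<Sum>x\<in>S. of_bool (G x y) + of_bool (G v x) * of_bool (G v y))"
    using assms by (intro sum.cong refl of_bool_local_complement) blast
  also have "\<dots> = (\<Sum>x\<in>S. of_bool (G x y)) + (\<Sum>x\<in>S. of_bool (G v x)) * of_bool (G v y)"
    by (simp only: sum.distrib sum_distrib_right)
  finally show ?thesis .
qed

lemma cut_rows_independent_local_complement_row:
  assumes "irreflp G" and "v \<in> X" and "X \<inter> Y = {}" and "finite X"
    and indep: "cut_rows_independent G X Y"
  shows "cut_rows_independent (local_complement v G) X Y"
  unfolding cut_rows_independent_def
proof (intro allI impI)
  fix S assume "S \<subseteq> X"
    and kernel: "\<forall>y\<in>Y. (\<Sum>x\<in>S. of_bool (local_complement v G x y) :: bit) = 0"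
  define c where "c = (\<Sum>x\<in>S. of_bool (G v x) :: bit)"
  have "finite S" using \<open>S \<subseteq> X\<close> \<open>finite X\<close> finite_subset by blast
  have shifted: "(\<Sum>x\<in>S. of_bool (G x y)) + c * of_bool (G v y) = (0::bit)" if "y \<in> Y" for y
  proof -
    have "y \<notin> S" using that \<open>S \<subseteq> X\<close> \<open>X \<inter> Y = {}\<close> by blast
    then have "(\<Sum>x\<in>S. of_bool (G x y)) + c * of_bool (G v y) =
               (\<Sum>x\<in>S. of_bool (local_complement v G x y) :: bit)"
      unfolding c_def by (rule sum_of_bool_local_complement[symmetric])
    also have "\<dots> = 0" using kernel that by blast
    finally show ?thesis .
  qed
  show "S = {}"
  proof (cases "c = 0")
    case True
    then show ?thesis using indep shifted \<open>S \<subseteq> X\<close> by (simp add: cut_rows_independent_def)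
  next
    case False
    then have "c = 1" by simp
    have "(\<Sum>x\<in>sym_diff S {v}. of_bool (G x y) :: bit) = 0" if "y \<in> Y" for y
      using shifted[OF that] \<open>c = 1\<close> sum_sym_diff_singleton_bit[OF \<open>finite S\<close>] by simp
    moreover have "sym_diff S {v} \<subseteq> X" using \<open>S \<subseteq> X\<close> \<open>v \<in> X\<close> by blast
    ultimately have "sym_diff S {v} = {}" using indep unfolding cut_rows_independent_def by blast
    then have "S = {v}" by blast
    then have "c = 0" using \<open>irreflp G\<close> by (simp add: c_def irreflp_def)
    then show ?thesis using False by contradiction
  qed
qed

lemma cut_rows_independent_local_complement_column:
  assumes "symp G" and "irreflp G" and "v \<in> Y" and "X \<inter> Y = {}"
    and indep: "cut_rows_independent G X Y"
  shows "cut_rows_independent (local_complement v G) X Y"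
  unfolding cut_rows_independent_def
proof (intro allI impI)
  fix S assume "S \<subseteq> X"
    and kernel: "\<forall>y\<in>Y. (\<Sum>x\<in>S. of_bool (local_complement v G x y) :: bit) = 0"
  have not_in_S: "y \<notin> S" if "y \<in> Y" for y using that \<open>S \<subseteq> X\<close> \<open>X \<inter> Y = {}\<close> by blast
  define c where "c = (\<Sum>x\<in>S. of_bool (G v x) :: bit)"
  have "c = (\<Sum>x\<in>S. of_bool (G x v))"
    unfolding c_def using \<open>symp G\<close> by (intro sum.cong refl) (auto dest: sympD)
  also have "\<dots> = (\<Sum>x\<in>S. of_bool (local_complement v G x v))"
    using sum_of_bool_local_complement[OF not_in_S[OF \<open>v \<in> Y\<close>], of v G] \<open>irreflp G\<close>
    by (simp add: irreflp_def)
  also have "\<dots> = 0" using kernel \<open>v \<in> Y\<close> by blast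
  finally have "c = 0" .
  then have "\<forall>y\<in>Y. (\<Sum>x\<in>S. of_bool (G x y) :: bit) = 0"
    using kernel sum_of_bool_local_complement[OF not_in_S] by (simp add: c_def)
  then show "S = {}" using indep \<open>S \<subseteq> X\<close> by (simp add: cut_rows_independent_def)
qed

lemma cut_rows_independent_local_complement_iff:
  assumes "symp G" and "irreflp G" and "v \<in> X \<union> Y" and "X \<inter> Y = {}" and "finite X"
  shows "cut_rows_independent (local_complement v G) X Y \<longleftrightarrow> cut_rows_independent G X Y"
proof -
  have preserved: "cut_rows_independent (local_complement v H) X Y"
    if "symp H" "irreflp H" "cut_rows_independent H X Y" for H
  proof (cases "v \<in> X")
    case True
    then show ?thesis
      using cut_rows_independent_local_complement_row[OF \<open>irreflp H\<close> _ assms(4,5) that(3)] by blast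
  next
    case False
    then show ?thesis
      using assms(3) cut_rows_independent_local_complement_column[OF that(1,2) _ assms(4) that(3)]
      by blast
  qed
  have "local_complement v (local_complement v G) = G"
    using \<open>irreflp G\<close> by (simp add: local_complement_local_complement irreflp_def)
  moreover have "cut_rows_independent (local_complement v (local_complement v G)) X Y"
    if "cut_rows_independent (local_complement v G) X Y"
    using preserved symp_local_complement[OF \<open>symp G\<close>] irreflp_local_complement[OF \<open>irreflp G\<close>]
      that by blast
  ultimately show ?thesis using preserved[OF assms(1,2)] by auto
qed

lemma locally_equivalent_cut_rows_independent_iff:
  assumes "locally_equivalent V G H" and "symp G" and "irreflp G"
    and "V \<subseteq> X \<union> Y" and "X \<inter> Y = {}" and "finite X"
  shows "cut_rows_independent H X Y \<longleftrightarrow> cut_rows_independent G X Y"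
proof -
  have "symp H \<and> irreflp H \<and> (cut_rows_independent H X Y \<longleftrightarrow> cut_rows_independent G X Y)"
    using assms(1) unfolding locally_equivalent_def
  proof (induction rule: rtranclp_induct)
    case base
    then show ?case using assms(2,3) by blast
  next
    case (step H H')
    then obtain v where "v \<in> V" and H': "H' = local_complement v H" by (auto simp: loc_step_def)
    then have "v \<in> X \<union> Y" using assms(4) by blast
    then show ?case
      using step.IH cut_rows_independent_local_complement_iff[OF _ _ _ assms(5,6), of H v]
        symp_local_complement[of H v] irreflp_local_complement[of H v] unfolding H' by blast
  qed
  then show ?thesis by blast
qed

lemma cut_rows_independent_iff_odd_card:
  assumes "finite X"
  shows "cut_rows_independent G X Y \<longleftrightarrow>
         (\<forall>S\<subseteq>X. S \<noteq> {} \<longrightarrow> (\<exists>y\<in>Y. odd (card {x\<in>S. G x y})))"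
proof -
  have "(\<Sum>x\<in>S. of_bool (G x y) :: bit) = 0 \<longleftrightarrow> even (card {x\<in>S. G x y})" if "S \<subseteq> X" for S y
    using finite_subset[OF that assms] by (rule sum_of_bool_bit_eq_0_iff)
  then show ?thesis unfolding cut_rows_independent_def by blast
qed

definition transversal :: "nat \<Rightarrow> (nat \<times> nat) set" where
  "transversal k = (\<lambda>i. (i, 0)) ` {..<k}"

lemma mem_transversal_iff [simp]: "(i, m) \<in> transversal k \<longleftrightarrow> i < k \<and> m = 0"
  by (auto simp: transversal_def)

lemma finite_transversal [simp]: "finite (transversal k)"
  by (simp add: transversal_def)

lemma card_transversal [simp]: "card (transversal k) = k"
  by (simp add: transversal_def card_image inj_on_def)

lemma vertex_1_of_part_outside_transversal:
  "\<forall>i<k. 2 \<le> n i \<Longrightarrow> j < k \<Longrightarrow> (j, 1) \<in> mp_vertices k n - transversal k"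
  by (force simp: mp_vertices_def)

lemma complete_multipartite_neighbours_in_transversal:
  assumes "\<forall>i<k. 0 < n i" and "S \<subseteq> transversal k" and "(j, m) \<in> mp_vertices k n"
  shows "{x\<in>S. complete_multipartite k n x (j, m)} = S - {(j, 0)}"
  using assms by (auto simp: complete_multipartite_def mp_vertices_def transversal_def)

lemma clique_star_neighbours_in_transversal:
  assumes "\<forall>i<k. 0 < n i" and "S \<subseteq> transversal k" and "(j, m) \<in> mp_vertices k n - transversal k"
  shows "{x\<in>S. clique_star k n r x (j, m)} = (if j = r then S else S \<inter> {(j, 0), (r, 0)})"
  using assms by (auto simp: clique_star_def mp_vertices_def transversal_def)

lemma cut_rows_independent_complete_multipartite:
  assumes n: "\<forall>i<k. 2 \<le> n i"
  shows "cut_rows_independent (complete_multipartite k n) (transversal k)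
           (mp_vertices k n - transversal k) \<longleftrightarrow> even k"
    (is "cut_rows_independent ?K ?X ?Y \<longleftrightarrow> _")
proof -
  have "\<forall>i<k. 0 < n i" using n by fastforce
  note neighbours = complete_multipartite_neighbours_in_transversal[OF this]
  show ?thesis
    unfolding cut_rows_independent_iff_odd_card[OF finite_transversal]
  proof (intro iffI allI impI)
    assume odd_column: "\<forall>S\<subseteq>?X. S \<noteq> {} \<longrightarrow> (\<exists>y\<in>?Y. odd (card {x\<in>S. ?K x y}))"
    show "even k"
    proof (rule ccontr)
      assume "odd k"
      then have "(0, 0) \<in> ?X" by (simp add: odd_pos)
      then obtain y where "y \<in> ?Y" and odd_card: "odd (card {x\<in>?X. ?K x y})"
        using odd_column by blast
      obtain j m where y: "y = (j, m)" by (cases y)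
      then have "odd (card (?X - {(j, 0)}))"
        using odd_card neighbours[OF subset_refl, of j m] \<open>y \<in> ?Y\<close> by simp
      moreover have "(j, 0) \<in> ?X" using \<open>y \<in> ?Y\<close> y by (auto simp: mp_vertices_def)
      ultimately show False using \<open>odd k\<close> by (simp add: odd_pos)
    qed
  next
    fix S assume "even k" and "S \<subseteq> ?X" and "S \<noteq> {}"
    show "\<exists>y\<in>?Y. odd (card {x\<in>S. ?K x y})"
    proof (rule ccontr)
      assume all_even: "\<not> ?thesis"
      have even_removal: "even (card (S - {(j, 0)}))" if "j < k" for j
      proof -
        have "(j, 1) \<in> ?Y" using vertex_1_of_part_outside_transversal[OF n that] .
        then have "even (card {x\<in>S. ?K x (j, 1)})" using all_even by blast
        then show ?thesis using neighbours[OF \<open>S \<subseteq> ?X\<close>] \<open>(j, 1) \<in> ?Y\<close> by simp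
      qed
      have "finite S" using finite_subset[OF \<open>S \<subseteq> ?X\<close>] by simp
      obtain j where "j < k" and "(j, 0) \<in> S"
        using \<open>S \<noteq> {}\<close> \<open>S \<subseteq> ?X\<close> by (auto simp: transversal_def)
      then have "odd (card S)"
        using even_removal[of j] card_Diff_singleton[of "(j, 0)" S] card_gt_0_iff[of S] \<open>finite S\<close>
        by (cases "card S") auto
      then have "S \<noteq> ?X" using \<open>even k\<close> by auto
      then obtain j' where "j' < k" and "(j', 0) \<notin> S"
        using \<open>S \<subseteq> ?X\<close> by (auto simp: transversal_def)
      then show False using even_removal[of j'] \<open>odd (card S)\<close> by simp
    qed
  qed
qed

lemma cut_rows_independent_clique_star:
  assumes n: "\<forall>i<k. 2 \<le> n i" and "r < k"
  shows "cut_rows_independent (clique_star k n r) (transversal k)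
           (mp_vertices k n - transversal k) \<longleftrightarrow> odd k"
    (is "cut_rows_independent ?C ?X ?Y \<longleftrightarrow> _")
proof -
  have "\<forall>i<k. 0 < n i" using n by fastforce
  note neighbours = clique_star_neighbours_in_transversal[OF this]
  show ?thesis
    unfolding cut_rows_independent_iff_odd_card[OF finite_transversal]
  proof (intro iffI allI impI)
    assume odd_column: "\<forall>S\<subseteq>?X. S \<noteq> {} \<longrightarrow> (\<exists>y\<in>?Y. odd (card {x\<in>S. ?C x y}))"
    show "odd k"
    proof
      assume "even k"
      have "(r, 0) \<in> ?X" using \<open>r < k\<close> by simp
      then obtain y where "y \<in> ?Y" and odd_card: "odd (card {x\<in>?X. ?C x y})"
        using odd_column by blast
      obtain j m where y: "y = (j, m)" by (cases y)
      then have "j < k" using \<open>y \<in> ?Y\<close> by (auto simp: mp_vertices_def)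
      have odd_neighbours: "odd (card (if j = r then ?X else ?X \<inter> {(j, 0), (r, 0)}))"
        using odd_card neighbours[OF subset_refl, of j m] \<open>y \<in> ?Y\<close> y by simp
      show False
      proof (cases "j = r")
        case True
        then show False using odd_neighbours \<open>even k\<close> by simp
      next
        case False
        then have "?X \<inter> {(j, 0), (r, 0)} = {(j, 0), (r, 0)}" using \<open>j < k\<close> \<open>r < k\<close> by auto
        then show False using odd_neighbours False by simp
      qed
    qed
  next
    fix S assume "odd k" and "S \<subseteq> ?X" and "S \<noteq> {}"
    show "\<exists>y\<in>?Y. odd (card {x\<in>S. ?C x y})"
    proof (rule ccontr)
      assume all_even: "\<not> ?thesis"
      have even_column: "even (card (if j = r then S else S \<inter> {(j, 0), (r, 0)}))"
        if "j < k" for j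
      proof -
        have "(j, 1) \<in> ?Y" using vertex_1_of_part_outside_transversal[OF n that] .
        then have "even (card {x\<in>S. ?C x (j, 1)})" using all_even by blast
        then show ?thesis using neighbours[OF \<open>S \<subseteq> ?X\<close> \<open>(j, 1) \<in> ?Y\<close>] by simp
      qed
      have no_single: "S \<inter> {(j, 0), (r, 0)} \<noteq> {x}" if "j < k" "j \<noteq> r" for j x
      proof
        assume "S \<inter> {(j, 0), (r, 0)} = {x}"
        then show False using even_column[OF that(1)] that(2) by simp
      qed
      show False
      proof (cases "(r, 0) \<in> S")
        case True
        have "S \<noteq> ?X" using even_column[OF \<open>r < k\<close>] \<open>odd k\<close> by auto
        then obtain j where "j < k" and "(j, 0) \<notin> S"
          using \<open>S \<subseteq> ?X\<close> by (auto simp: transversal_def)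
        then have "j \<noteq> r" and "S \<inter> {(j, 0), (r, 0)} = {(r, 0)}" using True by auto
        then show False using no_single[of j "(r, 0)"] \<open>j < k\<close> by simp
      next
        case False
        obtain j where "j < k" and "(j, 0) \<in> S"
          using \<open>S \<noteq> {}\<close> \<open>S \<subseteq> ?X\<close> by (auto simp: transversal_def)
        then have "j \<noteq> r" and "S \<inter> {(j, 0), (r, 0)} = {(j, 0)}" using False by auto
        then show False using no_single[of j "(j, 0)"] \<open>j < k\<close> by simp
      qed
    qed
  qed
qed

theorem theorem10:
  fixes k r :: nat and n :: "nat \<Rightarrow> nat"
  assumes "k \<ge> 3" and "\<forall>i<k. n i \<ge> 2" and "r < k"
  shows "loc_orbit (mp_vertices k n) (complete_multipartite k n)
         \<inter> loc_orbit (mp_vertices k n) (clique_star k n r) = {}"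
proof -
  let ?V = "mp_vertices k n" and ?X = "transversal k"
  let ?Y = "?V - ?X"
  have simple: "symp (complete_multipartite k n)" "irreflp (complete_multipartite k n)"
    "symp (clique_star k n r)" "irreflp (clique_star k n r)"
    by (auto simp: symp_def irreflp_def complete_multipartite_def clique_star_def)
  have cover: "?V \<subseteq> ?X \<union> ?Y" and disjoint: "?X \<inter> ?Y = {}" by blast+
  note invariant = locally_equivalent_cut_rows_independent_iff[OF _ _ _ cover disjoint finite_transversal]
  have False if K: "locally_equivalent ?V (complete_multipartite k n) H"
    and C: "locally_equivalent ?V (clique_star k n r) H" for H
  proof -
    have "cut_rows_independent H ?X ?Y \<longleftrightarrow> even k"
      using invariant[OF K simple(1,2)] cut_rows_independent_complete_multipartite[OF assms(2)]
      by simp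
    moreover have "cut_rows_independent H ?X ?Y \<longleftrightarrow> odd k"
      using invariant[OF C simple(3,4)] cut_rows_independent_clique_star[OF assms(2,3)] by simp
    ultimately show False by simp
  qed
  then show ?thesis by (auto simp: loc_orbit_def)
qed

end
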